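(* Let $\lambda_1,\lambda_2>0$ and let $X\sim\mathrm{Pois}(\lambda_1)$ and $Y\sim\mathrm{Pois}(\lambda_2)$ be independent Poisson random variables. For $n\ge1$ let $p_n=\mathbb{P}(XY\ge n)$. Then \[ p_n=\sqrt{2\pi}\,n^{1/4}\exp\bigl(-\sqrt{n}\,\log n+O(\sqrt{n})\bigr),\qquad n\to\infty. \] In particular, $\log p_n=-\sqrt{n}\,\log n+O(\sqrt{n})$.
   Context: $\log$ denotes the natural logarithm. $\mathrm{Pois}(\lambda)$ is the Poisson distribution with mean $\lambda$. *)

theory Defs
  imports "HOL-Probability.Probability" "HOL-Library.Landau_Symbols"
begin

definition pois_prod_tail :: "real \<Rightarrow> real \<Rightarrow> nat \<Rightarrow> real" where
  "pois_prod_tail l1 l2 n =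
     measure_pmf.prob (pair_pmf (poisson_pmf l1) (poisson_pmf l2)) {(x, y). x * y \<ge> n}"

end

theory Submission
  imports Defs "HOL-Real_Asymp.Real_Asymp"
begin

text \<open>The tail event contains the atom \<open>(k, k)\<close> with \<open>k = \<lceil>sqrt n\<rceil>\<close>, whose probability is
  \<open>exp (- 2 k ln k - O(k)) = exp (- sqrt n ln n - O(sqrt n))\<close> because \<open>ln k! \<le> k ln k\<close>.
  Conversely, if \<open>x y \<ge> n\<close> then \<open>ln x! + ln y! \<ge> x ln x + y ln y - (x + y) \<ge> (x + y) (ln n / 2 - 1)\<close>
  and \<open>x + y \<ge> 2 sqrt n\<close>, so with \<open>L = max l1 l2\<close> the atom \<open>(x, y)\<close> has probability at most
  \<open>(L^x / x!) (L^y / y!) = 2^(-x-y) (2L)^(x+y) / (x! y!) \<le> 2^(-x-y) exp (- sqrt n ln n + O(sqrt n))\<close>,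
  and the geometric factors sum to 4. The prefactor \<open>sqrt (2 pi) n^(1/4)\<close> is \<open>exp (O(ln n))\<close>
  and disappears into the error term.\<close>

lemma power_div_fact_le_exp:
  fixes x :: real
  assumes "x > 0"
  shows "x ^ n / fact n \<le> exp x"
  using pmf_le_1[of "poisson_pmf x" n] assms by (simp add: exp_minus field_simps)

lemma ln_fact_ge:
  assumes "n \<ge> 1"
  shows "real n * ln (real n) - real n \<le> ln (fact n)"
proof -
  have "real n ^ n \<le> exp (real n) * fact n"
    using power_div_fact_le_exp[of "real n" n] assms by (simp add: divide_le_eq)
  then have "ln (real n ^ n) \<le> ln (exp (real n) * fact n)"
    using assms by (subst ln_le_cancel_iff) auto
  then show ?thesis
    using assms by (simp add: ln_mult ln_realpow)
qed

lemma ln_fact_le: "ln (fact n) \<le> real n * ln (real n)"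
proof -
  have "fact n \<le> real n ^ n"
    using fact_le_power[of n] by simp
  then show ?thesis
    by (cases "n = 0") (simp_all add: ln_realpow flip: ln_le_cancel_iff)
qed

lemma mean_mult_ln_sum_le:
  fixes a b :: real
  assumes "a > 0" "b > 0"
  shows "(a + b) / 2 * (ln a + ln b) \<le> a * ln a + b * ln b"
proof -
  have "(a - b) * (ln a - ln b) \<ge> 0"
    using assms by (cases "a \<le> b") (auto intro: mult_nonpos_nonpos mult_nonneg_nonneg)
  then show ?thesis
    by (simp add: algebra_simps)
qed

lemma succ_mult_ln_succ_le:
  fixes s :: real
  assumes "s \<ge> 1"
  shows "(s + 1) * ln (s + 1) \<le> s * ln s + 2 * s"
proof -
  have "ln (s + 1) = ln (s * (1 + 1 / s))"
    using assms by (simp add: distrib_left)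
  also have "\<dots> = ln s + ln (1 + 1 / s)"
    using assms by (intro ln_mult_pos) (auto simp: add_pos_pos)
  also have "\<dots> \<le> ln s + 1 / s"
    using assms by (simp add: ln_add_one_self_le_self)
  finally have "(s + 1) * ln (s + 1) \<le> (s + 1) * (ln s + 1 / s)"
    using assms by (intro mult_left_mono) auto
  also have "\<dots> = s * ln s + ln s + 1 + 1 / s"
    using assms by (simp add: field_simps)
  also have "\<dots> \<le> s * ln s + 2 * s"
  proof -
    have "1 / s \<le> 1"
      using assms by simp
    then show ?thesis
      using assms ln_le_minus_one[of s] by linarith
  qed
  finally show ?thesis .
qed

lemma power_div_fact_prod_le:
  fixes a :: real and x y n :: nat
  assumes "a > 0" "n \<ge> 1" "x * y \<ge> n"
  shows "a ^ x / fact x * (a ^ y / fact y)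
           \<le> exp ((real x + real y) * (ln a + 1 - ln (real n) / 2))"
proof -
  have "x \<ge> 1" "y \<ge> 1"
    using assms(2,3) by (auto simp: Suc_le_eq intro: Nat.gr0I)
  have "ln (real n) \<le> ln (real x * real y)"
    using assms(2,3) \<open>x \<ge> 1\<close> \<open>y \<ge> 1\<close> by (simp flip: of_nat_mult)
  also have "\<dots> = ln (real x) + ln (real y)"
    using \<open>x \<ge> 1\<close> \<open>y \<ge> 1\<close> by (simp add: ln_mult)
  finally have "(real x + real y) / 2 * ln (real n) \<le> (real x + real y) / 2 * (ln (real x) + ln (real y))"
    by (intro mult_left_mono) auto
  also have "\<dots> \<le> real x * ln (real x) + real y * ln (real y)"
    using \<open>x \<ge> 1\<close> \<open>y \<ge> 1\<close> by (intro mean_mult_ln_sum_le) auto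
  finally have stirling: "(real x + real y) * (ln (real n) / 2 - 1) \<le> ln (fact x) + ln (fact y)"
    using ln_fact_ge[OF \<open>x \<ge> 1\<close>] ln_fact_ge[OF \<open>y \<ge> 1\<close>] by (simp add: algebra_simps)
  have pos: "a ^ x / fact x * (a ^ y / fact y) > 0"
    using assms(1) by simp
  have "ln (a ^ x / fact x * (a ^ y / fact y)) = (real x + real y) * ln a - (ln (fact x) + ln (fact y))"
    using assms(1) by (simp add: ln_mult ln_div ln_realpow algebra_simps)
  also have "\<dots> \<le> (real x + real y) * (ln a + 1 - ln (real n) / 2)"
    using stirling by (simp add: algebra_simps)
  finally show ?thesis
    using pos by (metis exp_le_cancel_iff exp_ln)
qed

lemma two_sqrt_le_add:
  fixes x y n :: nat
  assumes "x * y \<ge> n"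
  shows "2 * sqrt (real n) \<le> real x + real y"
proof -
  have "sqrt (real n) \<le> sqrt (real x * real y)"
    using assms by (simp flip: of_nat_mult)
  also have "\<dots> \<le> (real x + real y) / 2"
    by (rule arith_geo_mean_sqrt) auto
  finally show ?thesis
    by simp
qed

lemma poisson_pmf_prod_le:
  fixes l1 l2 L :: real and n x y :: nat
  assumes "0 < l1" "l1 \<le> L" "0 < l2" "l2 \<le> L" "n \<ge> 1" "x * y \<ge> n"
    and large: "ln (2 * L) + 1 \<le> ln (real n) / 2"
  shows "pmf (poisson_pmf l1) x * pmf (poisson_pmf l2) y
           \<le> exp (2 * sqrt (real n) * (ln (2 * L) + 1 - ln (real n) / 2)) * ((1/2) ^ x * (1/2) ^ y)"
proof -
  define D where "D = ln (2 * L) + 1 - ln (real n) / 2"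
  have "pmf (poisson_pmf l1) x * pmf (poisson_pmf l2) y
          = l1 ^ x / fact x * exp (- l1) * (l2 ^ y / fact y * exp (- l2))"
    using assms by simp
  also have "\<dots> \<le> L ^ x / fact x * 1 * (L ^ y / fact y * 1)"
    using assms by (intro mult_mono divide_right_mono power_mono) auto
  also have "\<dots> = (2 * L) ^ x / fact x * ((2 * L) ^ y / fact y) * ((1/2) ^ x * (1/2) ^ y)"
    by (simp add: power_mult_distrib field_simps)
  also have "\<dots> \<le> exp ((real x + real y) * D) * ((1/2) ^ x * (1/2) ^ y)"
    unfolding D_def using assms by (intro mult_right_mono power_div_fact_prod_le) auto
  also have "\<dots> \<le> exp (2 * sqrt (real n) * D) * ((1/2) ^ x * (1/2) ^ y)"
    using two_sqrt_le_add[OF \<open>x * y \<ge> n\<close>] large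
    by (intro mult_right_mono) (auto simp: D_def intro: mult_right_mono_neg)
  finally show ?thesis
    by (simp add: D_def)
qed

lemma pois_prod_tail_le:
  fixes l1 l2 L :: real and n :: nat
  assumes "0 < l1" "l1 \<le> L" "0 < l2" "l2 \<le> L" "n \<ge> 1"
    and "ln (2 * L) + 1 \<le> ln (real n) / 2"
  shows "pois_prod_tail l1 l2 n \<le> 4 * exp (2 * sqrt (real n) * (ln (2 * L) + 1 - ln (real n) / 2))"
proof -
  define E where "E = exp (2 * sqrt (real n) * (ln (2 * L) + 1 - ln (real n) / 2))"
  define P where "P = pair_pmf (poisson_pmf l1) (poisson_pmf l2)"
  define Q where "Q = pair_pmf (geometric_pmf (1/2)) (geometric_pmf (1/2))"
  define A where "A = {(x :: nat, y :: nat). x * y \<ge> n}"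
  \<comment> \<open>\<open>(1/2)^x (1/2)^y = 4 pmf Q (x, y)\<close>: the geometric majorant has total mass 1.\<close>
  have pmf_le: "pmf P z \<le> 4 * E * pmf Q z" if "z \<in> A" for z
  proof -
    obtain x y where z: "z = (x, y)"
      by (cases z)
    have "pmf P z \<le> E * ((1/2) ^ x * (1/2) ^ y)"
      unfolding P_def E_def z pmf_pair
      using assms that by (intro poisson_pmf_prod_le) (auto simp: A_def z)
    also have "\<dots> = 4 * E * pmf Q z"
      by (simp add: Q_def z pmf_pair)
    finally show ?thesis .
  qed
  have "pois_prod_tail l1 l2 n = infsetsum (pmf P) A"
    by (simp add: pois_prod_tail_def P_def A_def measure_pmf_conv_infsetsum)
  also have "\<dots> \<le> infsetsum (\<lambda>z. 4 * E * pmf Q z) A"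
    using pmf_le by (intro infsetsum_mono) auto
  also have "\<dots> = 4 * E * infsetsum (pmf Q) A"
    by (rule infsetsum_cmult_right) auto
  also have "\<dots> = 4 * E * measure_pmf.prob Q A"
    by (simp add: measure_pmf_conv_infsetsum)
  also have "\<dots> \<le> 4 * E"
    by (intro mult_left_le) (auto simp: E_def)
  finally show ?thesis
    by (simp add: E_def)
qed

lemma pmf_pair_le_pois_prod_tail:
  assumes "x * y \<ge> n"
  shows "pmf (poisson_pmf l1) x * pmf (poisson_pmf l2) y \<le> pois_prod_tail l1 l2 n"
proof -
  let ?P = "pair_pmf (poisson_pmf l1) (poisson_pmf l2)"
  have "pmf (poisson_pmf l1) x * pmf (poisson_pmf l2) y = measure_pmf.prob ?P {(x, y)}"
    by (simp add: measure_pmf_single pmf_pair)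
  also have "\<dots> \<le> measure_pmf.prob ?P {(x, y). x * y \<ge> n}"
    using assms by (intro measure_pmf.finite_measure_mono) auto
  finally show ?thesis
    by (simp add: pois_prod_tail_def)
qed

lemma pois_prod_tail_pos:
  assumes "l1 > 0" "l2 > 0"
  shows "pois_prod_tail l1 l2 n > 0"
proof -
  have "0 < pmf (poisson_pmf l1) n * pmf (poisson_pmf l2) n"
    using assms by simp
  also have "\<dots> \<le> pois_prod_tail l1 l2 n"
    by (rule pmf_pair_le_pois_prod_tail) simp
  finally show ?thesis .
qed

lemma ln_poisson_pmf_ge:
  fixes l :: real
  assumes "l > 0"
  shows "- real k * ln (real k) - real k * \<bar>ln l\<bar> - l \<le> ln (pmf (poisson_pmf l) k)"
proof -
  have "ln (pmf (poisson_pmf l) k) = real k * ln l - ln (fact k) - l"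
    using assms by (simp add: ln_mult ln_div ln_realpow)
  moreover have "- (real k * \<bar>ln l\<bar>) \<le> real k * ln l"
    using mult_left_mono[of "- \<bar>ln l\<bar>" "ln l" "real k"] by simp
  ultimately show ?thesis
    using ln_fact_le[of k] by linarith
qed

lemma ln_pois_prod_tail_ge:
  fixes l1 l2 :: real and n :: nat
  assumes "l1 > 0" "l2 > 0" "n \<ge> 1"
  shows "- sqrt (real n) * ln (real n) - (2 * \<bar>ln l1\<bar> + 2 * \<bar>ln l2\<bar> + l1 + l2 + 4) * sqrt (real n)
           \<le> ln (pois_prod_tail l1 l2 n)"
proof -
  define s where "s = sqrt (real n)"
  define k where "k = nat \<lceil>s\<rceil>"
  have "s \<ge> 1"
    using assms(3) by (simp add: s_def)
  then have k: "s \<le> real k" "real k \<le> s + 1"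
    by (auto simp: k_def)
  with \<open>s \<ge> 1\<close> have "k \<ge> 1"
    by (simp flip: of_nat_le_iff)
  have "real n = s\<^sup>2"
    by (simp add: s_def)
  also have "\<dots> \<le> (real k)\<^sup>2"
    using k \<open>s \<ge> 1\<close> by (intro power_mono) auto
  finally have "n \<le> k * k"
    by (simp add: power2_eq_square flip: of_nat_mult)
  have "real k * ln (real k) \<le> (s + 1) * ln (s + 1)"
    using k \<open>k \<ge> 1\<close> by (intro mult_mono) auto
  also have "\<dots> \<le> s * ln s + 2 * s"
    using \<open>s \<ge> 1\<close> by (rule succ_mult_ln_succ_le)
  finally have k_ln_k: "real k * ln (real k) \<le> s * ln s + 2 * s" .
  have k_ln: "real k * \<bar>ln l\<bar> \<le> 2 * s * \<bar>ln l\<bar>" for l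
    using k \<open>s \<ge> 1\<close> by (intro mult_right_mono) auto
  have "l1 \<le> l1 * s" "l2 \<le> l2 * s"
    using assms(1,2) \<open>s \<ge> 1\<close> by simp_all
  moreover have "sqrt (real n) * ln (real n) = 2 * (s * ln s)"
    using \<open>s \<ge> 1\<close> by (simp add: s_def ln_sqrt)
  moreover have "(2 * \<bar>ln l1\<bar> + 2 * \<bar>ln l2\<bar> + l1 + l2 + 4) * s
      = 2 * s * \<bar>ln l1\<bar> + 2 * s * \<bar>ln l2\<bar> + l1 * s + l2 * s + 4 * s"
    by (simp add: algebra_simps)
  ultimately have "- sqrt (real n) * ln (real n) - (2 * \<bar>ln l1\<bar> + 2 * \<bar>ln l2\<bar> + l1 + l2 + 4) * sqrt (real n)
        \<le> (- real k * ln (real k) - real k * \<bar>ln l1\<bar> - l1)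
          + (- real k * ln (real k) - real k * \<bar>ln l2\<bar> - l2)"
    using k_ln_k k_ln[of l1] k_ln[of l2] unfolding s_def[symmetric] by linarith
  also have "\<dots> \<le> ln (pmf (poisson_pmf l1) k) + ln (pmf (poisson_pmf l2) k)"
    using assms by (intro add_mono ln_poisson_pmf_ge)
  also have "\<dots> = ln (pmf (poisson_pmf l1) k * pmf (poisson_pmf l2) k)"
    using assms by (intro ln_mult_pos[symmetric]) simp_all
  also have "\<dots> \<le> ln (pois_prod_tail l1 l2 n)"
    using assms \<open>n \<le> k * k\<close> pmf_pair_le_pois_prod_tail[of n k k l1 l2] pois_prod_tail_pos[of l1 l2 n]
    by simp
  finally show ?thesis .
qed

lemma ln_pois_prod_tail_bigo:
  fixes l1 l2 :: real
  assumes "l1 > 0" "l2 > 0"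
  shows "(\<lambda>n. ln (pois_prod_tail l1 l2 n) + sqrt (real n) * ln (real n)) \<in> O(\<lambda>n. sqrt (real n))"
proof -
  define C where "C = 2 * \<bar>ln l1\<bar> + 2 * \<bar>ln l2\<bar> + l1 + l2 + 4"
  define D where "D = ln (2 * max l1 l2) + 1"
  have "eventually (\<lambda>n::nat. D \<le> ln (real n) / 2) at_top"
    by real_asymp
  moreover have "eventually (\<lambda>n::nat. n \<ge> 1) at_top"
    by (rule eventually_ge_at_top)
  ultimately have "eventually (\<lambda>n. \<bar>ln (pois_prod_tail l1 l2 n) + sqrt (real n) * ln (real n)\<bar>
                                 \<le> (C + 3 + 2 * \<bar>D\<bar>) * sqrt (real n)) at_top"
  proof eventually_elim
    case (elim n)
    define s where "s = sqrt (real n)"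
    have "s \<ge> 1"
      using elim by (simp add: s_def)
    have lower: "- (s * ln (real n)) - C * s \<le> ln (pois_prod_tail l1 l2 n)"
      using ln_pois_prod_tail_ge[OF assms \<open>n \<ge> 1\<close>] by (simp add: C_def s_def)
    have "pois_prod_tail l1 l2 n \<le> 4 * exp (2 * s * (D - ln (real n) / 2))"
      using pois_prod_tail_le[OF assms(1) _ assms(2) _ \<open>n \<ge> 1\<close>] elim by (simp add: D_def s_def)
    then have "ln (pois_prod_tail l1 l2 n) \<le> ln 4 + 2 * s * (D - ln (real n) / 2)"
      using pois_prod_tail_pos[OF assms] by (simp add: ln_ge_iff ln_mult flip: ln_le_cancel_iff)
    then have upper: "ln (pois_prod_tail l1 l2 n) \<le> ln 4 + 2 * s * D - s * ln (real n)"
      by (simp add: algebra_simps)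
    have "ln (4 :: real) \<le> 3 * s"
      using ln_le_minus_one[of 4] \<open>s \<ge> 1\<close> by simp
    moreover have "2 * s * D \<le> 2 * s * \<bar>D\<bar>" "0 \<le> 2 * s * \<bar>D\<bar>" "0 \<le> C * s"
      using assms \<open>s \<ge> 1\<close> by (auto simp: C_def intro: mult_left_mono)
    moreover have "(C + 3 + 2 * \<bar>D\<bar>) * s = C * s + 3 * s + 2 * s * \<bar>D\<bar>"
      by (simp add: algebra_simps)
    ultimately show ?case
      using lower upper \<open>s \<ge> 1\<close> unfolding s_def[symmetric] abs_le_iff by linarith
  qed
  then show ?thesis
    by (intro bigoI) simp
qed

theorem theorem2:
  fixes l1 l2 :: real
  assumes "l1 > 0" and "l2 > 0"
  shows "\<exists>f :: nat \<Rightarrow> real. f \<in> O(\<lambda>n. sqrt (real n)) \<and>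
           (\<forall>n\<ge>1. pois_prod_tail l1 l2 n =
              sqrt (2 * pi) * real n powr (1/4) * exp (- sqrt (real n) * ln (real n) + f n))"
proof -
  define c where "c n = sqrt (2 * pi) * real n powr (1/4)" for n :: nat
  define f where "f n = ln (pois_prod_tail l1 l2 n) + sqrt (real n) * ln (real n) - ln (c n)" for n
  have "(\<lambda>n. ln (c n)) \<in> O(\<lambda>n. sqrt (real n))"
    unfolding c_def by real_asymp
  then have "f \<in> O(\<lambda>n. sqrt (real n))"
    unfolding f_def using ln_pois_prod_tail_bigo[OF assms] by (rule sum_in_bigo(2)[rotated])
  moreover have "pois_prod_tail l1 l2 n = c n * exp (- sqrt (real n) * ln (real n) + f n)" if "n \<ge> 1" for n
    using that pois_prod_tail_pos[OF assms, of n] by (simp add: f_def c_def exp_diff)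
  ultimately show ?thesis
    unfolding c_def by blast
qed

end
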